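(* Let $n,q\ge 1$, let $\hat\theta$ be a deterministic (measurable) map from datasets of size $n$ to $\mathbb{R}^q$, let $\alpha>0$, $0<\epsilon<2$, $0<\delta<1$, and let $\mathcal{G}$ be a set of datasets with $\mathcal{G}\subseteq \mathrm{sub}_\alpha(\Delta_{\hat\theta})$. If $\gamma$ is a sub-distance to $\mathcal{G}^c$, then the ePTR output $\tilde\theta_\gamma$ (built from $\hat\theta,\alpha,\gamma,\epsilon,\delta$ and any fixed no-reply distribution $\pi_\perp$) is $(\epsilon,\delta)$-differentially private.
   Context: Datasets are $n$-tuples $\mathcal{X}=(z_1,\dots,z_n)$ of points of a data space $\mathcal{Z}$. For datasets $\mathcal{X},\mathcal{X}'$, $D_H(\mathcal{X},\mathcal{X}')$ denotes the number of indices $i$ with $z_i\neq z_i'$ (the paper calls this the Hellinger distance; it is the Hamming distance); $\mathcal{X},\mathcal{X}'$ are neighbors if $D_H(\mathcal{X},\mathcal{X}')=1$. A randomized map $A$ from datasets to an output space is $(\epsilon,\delta)$-differentially private (DP) if $P(A(\mathcal{X})\in\mathcal{B})\le e^{\epsilon}P(A(\mathcal{X}')\in\mathcal{B})+\delta$ for all neighbors $\mathcal{X},\mathcal{X}'$ and all measurable $\mathcal{B}$. Local sensitivity: $\Delta_{\hat\theta}(\mathcal{X})=\sup\{\|\hat\theta(\mathcal{X})-\hat\theta(\mathcal{X}')\|: D_H(\mathcal{X},\mathcal{X}')=1\}$; the sub-sensitivity set is $\mathrm{sub}_\alpha(\Delta_{\hat\theta})=\{\mathcal{X}:\Delta_{\hat\theta}(\mathcal{X})\le\alpha\}$.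 Sub-distance: given a set $\mathcal{G}$ of datasets, a function $\gamma$ from datasets to $[0,\infty)$ is a sub-distance to $\mathcal{G}^c$ if $|\gamma(\mathcal{X})-\gamma(\mathcal{X}')|\le D_H(\mathcal{X},\mathcal{X}')$ for all $\mathcal{X},\mathcal{X}'$ and $\{\mathcal{X}:\gamma(\mathcal{X})>0\}\subseteq\mathcal{G}$. Efficient PTR (ePTR): fix $q$, a map $\hat\theta$ into $\mathbb{R}^q$, a level $\alpha>0$, a function $\gamma$ from datasets to $[0,\infty)$, $\epsilon>0$, $\delta\in(0,1)$, and a fixed probability distribution $\pi_\perp$ on $\mathbb{R}^q$ (the "no reply" output $\perp$; a point mass is allowed). Let $M=1+\frac{2}{\epsilon}\log\max\{1/\delta,1/\epsilon\}$ and $p(\mathcal{X})=\frac{\exp(\frac12\epsilon(\gamma(\mathcal{X})-M))}{\exp(\frac12\epsilon(\gamma(\mathcal{X})-M))+1}$. On input $\mathcal{X}$, draw independently $I\sim\mathrm{Bernoulli}(p(\mathcal{X}))$, $\zeta\sim\mathcal{N}(0,I_q)$ and $W\sim\pi_\perp$, and output $\tilde\theta_\gamma(\mathcal{X})=\tilde\theta_\alpha(\mathcal{X}):=\hat\theta(\mathcal{X})+\frac{2\alpha}{\epsilon}\sqrt{2\log(1.25/\delta)}\,\zeta$ if $I=1$ and $\tilde\theta_\gamma(\mathcal{X})=W$ if $I=0$. *)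

theory Defs
  imports "HOL-Probability.Probability"
begin

text \<open>Datasets are lists over the data space 'z; datasets of size n are lists of length n.
  Hamming distance (called Hellinger distance in the paper).\<close>
definition hamming :: "'z list \<Rightarrow> 'z list \<Rightarrow> nat" where
  "hamming X X' = card {i. i < length X \<and> X ! i \<noteq> X' ! i}"

definition datasets :: "nat \<Rightarrow> 'z list set" where
  "datasets n = {X. length X = n}"

definition neighbors :: "nat \<Rightarrow> 'z list \<Rightarrow> 'z list \<Rightarrow> bool" where
  "neighbors n X X' \<longleftrightarrow> X \<in> datasets n \<and> X' \<in> datasets n \<and> hamming X X' = 1"

definition local_sens :: "nat \<Rightarrow> ('z list \<Rightarrow> 'a::real_normed_vector) \<Rightarrow> 'z list \<Rightarrow> ereal" where
  "local_sens n \<theta> X = (SUP X'\<in>{X'. neighbors n X X'}. ereal (norm (\<theta> X - \<theta> X')))"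

definition sub_sens :: "nat \<Rightarrow> real \<Rightarrow> ('z list \<Rightarrow> 'a::real_normed_vector) \<Rightarrow> 'z list set" where
  "sub_sens n \<alpha> \<theta> = {X \<in> datasets n. local_sens n \<theta> X \<le> ereal \<alpha>}"

definition sub_distance :: "nat \<Rightarrow> 'z list set \<Rightarrow> ('z list \<Rightarrow> real) \<Rightarrow> bool" where
  "sub_distance n G \<gamma> \<longleftrightarrow>
     (\<forall>X\<in>datasets n. \<gamma> X \<ge> 0) \<and>
     (\<forall>X\<in>datasets n. \<forall>X'\<in>datasets n. \<bar>\<gamma> X - \<gamma> X'\<bar> \<le> real (hamming X X')) \<and>
     {X \<in> datasets n. \<gamma> X > 0} \<subseteq> G"

definition std_gauss :: "(real ^ 'q) measure" where
  "std_gauss = density lborel (\<lambda>x. \<Prod>i\<in>UNIV. ennreal (std_normal_density (x $ i)))"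

definition ePTR_M :: "real \<Rightarrow> real \<Rightarrow> real" where
  "ePTR_M \<epsilon> \<delta> = 1 + 2 / \<epsilon> * ln (max (1 / \<delta>) (1 / \<epsilon>))"

definition ePTR_p :: "real \<Rightarrow> real \<Rightarrow> real \<Rightarrow> real" where
  "ePTR_p \<epsilon> \<delta> g = exp (\<epsilon> / 2 * (g - ePTR_M \<epsilon> \<delta>)) / (exp (\<epsilon> / 2 * (g - ePTR_M \<epsilon> \<delta>)) + 1)"

definition ePTR :: "('z list \<Rightarrow> real ^ 'q) \<Rightarrow> real \<Rightarrow> ('z list \<Rightarrow> real) \<Rightarrow> real \<Rightarrow> real
    \<Rightarrow> (real ^ 'q) measure \<Rightarrow> 'z list \<Rightarrow> (real ^ 'q) measure" where
  "ePTR \<theta> \<alpha> \<gamma> \<epsilon> \<delta> \<pi> X =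
     distr (measure_pmf (bernoulli_pmf (ePTR_p \<epsilon> \<delta> (\<gamma> X))) \<Otimes>\<^sub>M (std_gauss \<Otimes>\<^sub>M \<pi>)) borel
       (\<lambda>(I, \<zeta>, W). if I then \<theta> X + (2 * \<alpha> / \<epsilon> * sqrt (2 * ln (1.25 / \<delta>))) *\<^sub>R \<zeta> else W)"

definition DP :: "nat \<Rightarrow> real \<Rightarrow> real \<Rightarrow> ('z list \<Rightarrow> 'b measure) \<Rightarrow> bool" where
  "DP n \<epsilon> \<delta> A \<longleftrightarrow>
     (\<forall>X X' B. neighbors n X X' \<longrightarrow> B \<in> sets (A X) \<longrightarrow>
        measure (A X) B \<le> exp \<epsilon> * measure (A X') B + \<delta>)"

end

theory Submission
  imports Defs
begin

(* If gamma X > 0 then X lies in G, so theta moves by at most alpha to any neighbour, and Gaussian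
   noise of scale sigma = 2 alpha c / epsilon with c = sqrt (2 ln (1.25 / delta)) is an
   (epsilon/2, delta)-private release: the privacy loss <y, w> + |w|^2/2 of the shift w is a normal
   variable and exceeds epsilon/2 with probability at most delta. If gamma X = 0, the reply
   probability p X is already at most delta. Since gamma is 1-Lipschitz and p is a logistic
   function of epsilon/2 * gamma, both p and 1 - p change by at most a factor exp (epsilon/2)
   between neighbours. Mixing the two branches gives exp (epsilon/2)^2 = exp epsilon. *)

section \<open>Tail bounds for the standard normal distribution\<close>

abbreviation std_normal :: "real measure" where
  "std_normal \<equiv> density lborel (\<lambda>x. ennreal (std_normal_density x))"

lemma prob_space_std_normal: "prob_space std_normal"
  by (rule prob_space_normal_density) simp

lemma emeasure_std_normal_greaterThan_0: "emeasure std_normal {0<..} = 1/2"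
proof -
  interpret prob_space std_normal by (rule prob_space_std_normal)
  have "emeasure std_normal {..<0} = (\<integral>\<^sup>+x. ennreal (std_normal_density x) * indicator {..<0} x \<partial>lborel)"
    by (simp add: emeasure_density)
  also have "\<dots> = (\<integral>\<^sup>+x. ennreal (std_normal_density (- x)) * indicator {..<0} (- x) \<partial>lborel)"
    using nn_integral_real_affine[of "\<lambda>x. ennreal (std_normal_density x) * indicator {..<0} x" "-1" 0]
    by simp
  also have "\<dots> = emeasure std_normal {0<..}"
    by (simp add: emeasure_density std_normal_density_def indicator_def)
  finally have sym: "emeasure std_normal {..<0} = emeasure std_normal {0<..}" .
  have null: "emeasure std_normal {0} = 0"
    by (simp add: emeasure_density nn_integral_0_iff_AE AE_lborel_singleton)
  have "emeasure std_normal {0} + emeasure std_normal {0<..} = emeasure std_normal {0..}"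
    by (subst plus_emeasure) (auto intro!: arg_cong[where f="emeasure std_normal"])
  moreover have "emeasure std_normal {..<0} + emeasure std_normal {0..} = 1"
  proof -
    have "{..<0} \<union> {0..} = space std_normal" by auto
    then show ?thesis using emeasure_space_1 by (subst plus_emeasure) auto
  qed
  ultimately have half: "2 * emeasure std_normal {0<..} = 1"
    using sym null by (simp add: mult_2)
  have "emeasure std_normal {0<..} = 2 * emeasure std_normal {0<..} / 2"
    using ennreal_mult_divide_eq[of 2 "emeasure std_normal {0<..}"] by (simp add: mult.commute)
  also have "\<dots> = 1 / 2" by (simp only: half)
  finally show ?thesis .
qed

lemma std_normal_density_add:
  "std_normal_density (u + v) = std_normal_density u * exp (- (u * v) - v\<^sup>2 / 2)"
proof -
  have "exp (- (u + v)\<^sup>2 / 2) = exp (- u\<^sup>2 / 2) * exp (- (u * v) - v\<^sup>2 / 2)"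
    unfolding mult_exp_exp by (simp add: power2_eq_square field_simps)
  then show ?thesis unfolding std_normal_density_def by simp
qed

lemma std_normal_density_le_half: "std_normal_density x \<le> 1 / 2"
proof -
  have "2 \<le> sqrt (2 * pi)" using pi_gt3 by (simp add: real_le_rsqrt)
  then have "1 / sqrt (2 * pi) * exp (- x\<^sup>2 / 2) \<le> 1 / 2 * 1"
    by (intro mult_mono) (auto simp: divide_simps)
  then show ?thesis unfolding std_normal_density_def by simp
qed

lemma emeasure_std_normal_greaterThan_le_exp:
  fixes t :: real assumes "0 \<le> t"
  shows "emeasure std_normal {t<..} \<le> ennreal (exp (- t\<^sup>2 / 2) / 2)"
proof -
  have "emeasure std_normal {t<..} = (\<integral>\<^sup>+x. ennreal (std_normal_density x) * indicator {t<..} x \<partial>lborel)"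
    by (simp add: emeasure_density)
  also have "\<dots> = (\<integral>\<^sup>+y. ennreal (std_normal_density (t + y)) * indicator {0<..} y \<partial>lborel)"
    using nn_integral_real_affine[of "\<lambda>x. ennreal (std_normal_density x) * indicator {t<..} x" 1 t]
    by (simp add: indicator_def)
  also have "\<dots> \<le> (\<integral>\<^sup>+y. ennreal (exp (- t\<^sup>2 / 2)) * (ennreal (std_normal_density y) * indicator {0<..} y)
      \<partial>lborel)"
  proof (rule nn_integral_mono)
    fix y :: real
    have "std_normal_density (t + y) \<le> exp (- t\<^sup>2 / 2) * std_normal_density y" if "0 < y"
      using that assms unfolding add.commute[of t] std_normal_density_add
      by (simp add: mult.commute mult_left_mono)
    then show "ennreal (std_normal_density (t + y)) * indicator {0<..} y
        \<le> ennreal (exp (- t\<^sup>2 / 2)) * (ennreal (std_normal_density y) * indicator {0<..} y)"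
      by (simp add: indicator_def ennreal_mult'[symmetric] ennreal_leI)
  qed
  also have "\<dots> = ennreal (exp (- t\<^sup>2 / 2)) * emeasure std_normal {0<..}"
    by (simp add: nn_integral_cmult emeasure_density)
  also have "\<dots> = ennreal (exp (- t\<^sup>2 / 2) / 2)"
    by (simp add: emeasure_std_normal_greaterThan_0 ennreal_times_divide ennreal_divide_numeral)
  finally show ?thesis .
qed

lemma emeasure_std_normal_greaterThan_le_linear:
  fixes t :: real assumes "t \<le> 0"
  shows "emeasure std_normal {t<..} \<le> ennreal ((1 - t) / 2)"
proof -
  have "emeasure std_normal {t<..0} = (\<integral>\<^sup>+x. ennreal (std_normal_density x) * indicator {t<..0} x \<partial>lborel)"
    by (simp add: emeasure_density)
  also have "\<dots> \<le> (\<integral>\<^sup>+x. ennreal (1 / 2) * indicator {t<..0} x \<partial>lborel)"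
    by (intro nn_integral_mono mult_right_mono ennreal_leI std_normal_density_le_half) simp
  also have "\<dots> = ennreal (1 / 2) * ennreal (- t)"
    using assms by (subst nn_integral_cmult_indicator) auto
  also have "\<dots> = ennreal (1 / 2 * - t)"
    by (rule ennreal_mult'[symmetric]) simp
  finally have "emeasure std_normal {t<..0} \<le> ennreal (1 / 2 * - t)" .
  have "{t<..} = {t<..0} \<union> {0<..}" using assms by auto
  then have "emeasure std_normal {t<..} \<le> emeasure std_normal {t<..0} + emeasure std_normal {0<..}"
    by (simp add: emeasure_subadditive)
  also have "\<dots> \<le> ennreal (1 / 2 * - t) + ennreal (1 / 2)"
    using \<open>emeasure std_normal {t<..0} \<le> ennreal (1 / 2 * - t)\<close>
    by (simp add: emeasure_std_normal_greaterThan_0 ennreal_divide_numeral[of 1, simplified] add_mono)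
  also have "\<dots> = ennreal ((1 - t) / 2)"
    using assms by (subst ennreal_plus[symmetric]) (auto simp: field_simps)
  finally show ?thesis .
qed

(* c - e / (2 c) is the least value of the standardized threshold e / s - s / 2 of the Gaussian
   mechanism over all shifts 0 < s \<le> e / c, measured in units of the noise scale. *)
lemma emeasure_std_normal_greaterThan_le_delta:
  fixes e \<delta> t :: real
  defines "c \<equiv> sqrt (2 * ln (1.25 / \<delta>))"
  assumes e: "0 < e" "e < 1" and \<delta>: "0 < \<delta>" "\<delta> < 1" and t: "c - e / (2 * c) \<le> t"
  shows "emeasure std_normal {t<..} \<le> ennreal \<delta>"
proof -
  have "0 < ln (1.25 / \<delta>)" using \<delta> by simp
  then have c2: "c\<^sup>2 = 2 * ln (1.25 / \<delta>)" and c: "0 < c" unfolding c_def by simp_all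
  have exp_c2: "exp (- c\<^sup>2 / 2) = 4 / 5 * \<delta>"
    using \<delta> by (simp add: c2 exp_minus)
  show ?thesis
  proof (cases "0 \<le> c - e / (2 * c)")
    case True
    have "c\<^sup>2 - e \<le> (c - e / (2 * c))\<^sup>2"
      using c by (simp add: power2_eq_square field_simps)
    also have "\<dots> \<le> t\<^sup>2" using True t by (intro power_mono) auto
    finally have "exp (- t\<^sup>2 / 2) \<le> exp (- c\<^sup>2 / 2) * exp (1 / 2)"
      using e by (simp add: mult_exp_exp)
    also have "\<dots> \<le> 4 / 5 * \<delta> * 2"
      unfolding exp_c2 using exp_half_le2 \<delta> by (intro mult_left_mono) auto
    finally have "exp (- t\<^sup>2 / 2) / 2 \<le> \<delta>" using \<delta> by linarith
    moreover have "0 \<le> t" using True t by linarith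
    ultimately show ?thesis
      by (blast intro: order_trans[OF emeasure_std_normal_greaterThan_le_exp ennreal_leI])
  next
    \<comment> \<open>only possible for \<open>\<delta> \<ge> 15/16\<close>, where crude bounds suffice\<close>
    case False
    then have "c\<^sup>2 / 2 < 1 / 4" using c e by (simp add: power2_eq_square field_simps)
    then have "exp (- 1 / 4) \<le> exp (- c\<^sup>2 / 2)" by simp
    moreover have "3 / 4 \<le> exp (- 1 / 4 :: real)" using exp_ge_add_one_self[of "- 1 / 4"] by simp
    ultimately have \<delta>_large: "15 / 16 \<le> \<delta>" using exp_c2 by linarith
    show ?thesis
    proof (cases "0 \<le> t")
      case True
      have "exp (- t\<^sup>2 / 2) \<le> 1" by simp
      then have "exp (- t\<^sup>2 / 2) / 2 \<le> \<delta>" using \<delta>_large by linarith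
      then show ?thesis
        by (rule order_trans[OF emeasure_std_normal_greaterThan_le_exp[OF True] ennreal_leI])
    next
      case False
      have "1 / 8 \<le> ln (1.25 :: real)"
        using ln_le_minus_one[of "1 / 1.25 :: real"] by (simp add: ln_div)
      also have "\<dots> \<le> ln (1.25 / \<delta>)" using \<delta> by (simp add: le_divide_eq)
      finally have "(1 / 2)\<^sup>2 \<le> c\<^sup>2" unfolding c2 by (simp add: power2_eq_square)
      then have "1 / 2 \<le> c" using c by (simp add: power2_le_iff_abs_le)
      moreover have "e / (2 * c) \<le> 1" using \<open>1 / 2 \<le> c\<close> e by simp
      ultimately have "- t \<le> 1 / 2" using t by linarith
      then have "(1 - t) / 2 \<le> \<delta>" using \<delta>_large by (simp add: field_simps)
      then show ?thesis
        using False by (intro order_trans[OF emeasure_std_normal_greaterThan_le_linear ennreal_leI]) auto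
    qed
  qed
qed

section \<open>The standard Gaussian measure on a Euclidean space\<close>

definition std_gaussian_density :: "'a::euclidean_space \<Rightarrow> real" where
  "std_gaussian_density x = (\<Prod>b\<in>Basis. std_normal_density (x \<bullet> b))"

definition std_gaussian :: "'a::euclidean_space measure" where
  "std_gaussian = density lborel (\<lambda>x. ennreal (std_gaussian_density x))"

lemma borel_measurable_std_gaussian_density[measurable]: "std_gaussian_density \<in> borel_measurable borel"
  unfolding std_gaussian_density_def by measurable

lemma std_gaussian_density_nonneg: "0 \<le> std_gaussian_density x"
  unfolding std_gaussian_density_def by (simp add: prod_nonneg)

lemma space_std_gaussian[simp]: "space std_gaussian = UNIV"
  and sets_std_gaussian[simp, measurable_cong]: "sets std_gaussian = sets borel"
  by (simp_all add: std_gaussian_def)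

lemma std_gauss_eq_std_gaussian: "(std_gauss :: (real ^ 'n) measure) = std_gaussian"
proof -
  have "(\<Prod>i\<in>UNIV. std_normal_density (x $ i)) = std_gaussian_density x" for x :: "real ^ 'n"
  proof -
    have Basis_eq: "(Basis :: (real ^ 'n) set) = range (\<lambda>i. axis i 1)"
      by (auto simp: Basis_vec_def)
    have "inj (\<lambda>i::'n. axis i (1::real))" by (auto intro!: inj_onI simp: axis_eq_axis)
    then show ?thesis
      unfolding std_gaussian_density_def Basis_eq by (simp add: prod.reindex inner_axis)
  qed
  then show ?thesis
    unfolding std_gauss_def std_gaussian_def by (simp add: prod_ennreal)
qed

lemma density_PiM_lborel_eq_PiM_std_normal:
  "density (\<Pi>\<^sub>M b\<in>Basis. lborel)
      (\<lambda>f. ennreal (std_gaussian_density ((\<Sum>b\<in>Basis. f b *\<^sub>R b) :: 'a::euclidean_space)))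
    = (\<Pi>\<^sub>M b\<in>(Basis :: 'a set). std_normal)" (is "?D = _")
proof -
  interpret N: product_sigma_finite "\<lambda>_::'a. std_normal"
    unfolding product_sigma_finite_def
    using prob_space_std_normal prob_space_imp_sigma_finite by blast
  interpret L: product_sigma_finite "\<lambda>_::'a. lborel :: real measure"
    unfolding product_sigma_finite_def using sigma_finite_lborel by blast
  have density_eq: "ennreal (std_gaussian_density ((\<Sum>b\<in>Basis. f b *\<^sub>R b) :: 'a))
      = (\<Prod>b\<in>Basis. ennreal (std_normal_density (f b)))" for f :: "'a \<Rightarrow> real"
    unfolding std_gaussian_density_def
    by (simp add: prod_ennreal inner_sum_left inner_Basis if_distrib cong: if_cong)
  show ?thesis
  proof (rule N.PiM_eqI)
    fix A :: "'a \<Rightarrow> real set" assume A: "\<And>b. b \<in> Basis \<Longrightarrow> A b \<in> sets std_normal"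
    have "emeasure ?D (Pi\<^sub>E Basis A)
        = (\<integral>\<^sup>+f. (\<Prod>b\<in>Basis. ennreal (std_normal_density (f b)) * indicator (A b) (f b))
            \<partial>(\<Pi>\<^sub>M b\<in>Basis. lborel))"
      using A
      by (subst emeasure_density)
         (auto intro!: nn_integral_cong sets_PiM_I_finite
           simp: density_eq prod.distrib indicator_def space_PiM PiE_iff)
    also have "\<dots> = (\<Prod>b\<in>Basis. emeasure std_normal (A b))"
      using A by (subst L.product_nn_integral_prod) (auto simp: emeasure_density)
    finally show "emeasure ?D (Pi\<^sub>E Basis A) = (\<Prod>b\<in>Basis. emeasure std_normal (A b))" .
  qed (auto intro!: sets_PiM_cong)
qed

lemma std_gaussian_eq_distr_PiM:
  "std_gaussian = distr (\<Pi>\<^sub>M b\<in>Basis. std_normal) borel (\<lambda>f. \<Sum>b\<in>Basis. f b *\<^sub>R b)"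
proof -
  have "std_gaussian = density (distr (\<Pi>\<^sub>M b\<in>Basis. lborel) borel (\<lambda>f. \<Sum>b\<in>Basis. f b *\<^sub>R b))
      (\<lambda>x. ennreal (std_gaussian_density x))"
    unfolding std_gaussian_def by (subst lborel_eq) (rule refl)
  also have "\<dots> = distr (\<Pi>\<^sub>M b\<in>Basis. std_normal) borel (\<lambda>f. \<Sum>b\<in>Basis. f b *\<^sub>R b)"
    by (subst density_distr) (auto simp: density_PiM_lborel_eq_PiM_std_normal)
  finally show ?thesis .
qed

lemma prob_space_std_gaussian: "prob_space std_gaussian"
  unfolding std_gaussian_eq_distr_PiM
  by (intro prob_space.prob_space_distr prob_space_PiM prob_space_std_normal) auto

lemma indep_vars_PiM_components:
  assumes M: "\<And>i. i \<in> I \<Longrightarrow> prob_space (M i)" and "I \<noteq> {}"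
  shows "prob_space.indep_vars (Pi\<^sub>M I M) M (\<lambda>i \<omega>. \<omega> i) I"
proof -
  interpret prob_space "Pi\<^sub>M I M" by (rule prob_space_PiM[OF M])
  have "distr (Pi\<^sub>M I M) (Pi\<^sub>M I M) (\<lambda>\<omega>. \<lambda>i\<in>I. \<omega> i) = distr (Pi\<^sub>M I M) (Pi\<^sub>M I M) (\<lambda>\<omega>. \<omega>)"
    by (rule distr_cong) (auto simp: space_PiM)
  also have "\<dots> = Pi\<^sub>M I M" by (rule distr_id)
  also have "\<dots> = Pi\<^sub>M I (\<lambda>i. distr (Pi\<^sub>M I M) (M i) (\<lambda>\<omega>. \<omega> i))"
    using distr_PiM_component[of I M, OF M] by (auto intro!: PiM_cong)
  finally show ?thesis
    using \<open>I \<noteq> {}\<close> by (subst indep_vars_iff_distr_eq_PiM') auto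
qed

lemma (in prob_space) normalized_sum_std_normal_distributed:
  assumes "finite I" and indep: "indep_vars (\<lambda>_. borel) X I"
    and X: "\<And>i. i \<in> I \<Longrightarrow> distributed M lborel (X i) std_normal_density"
    and "\<exists>i\<in>I. a i \<noteq> 0"
  shows "distributed M lborel (\<lambda>x. (\<Sum>i\<in>I. a i * X i x) / sqrt (\<Sum>i\<in>I. (a i)\<^sup>2)) std_normal_density"
proof -
  define J where "J = {i\<in>I. a i \<noteq> 0}"
  have "finite J" "J \<noteq> {}" "J \<subseteq> I" using assms unfolding J_def by auto
  have sum_J: "(\<Sum>i\<in>I. f i) = (\<Sum>i\<in>J. f i)" if "\<And>i. a i = 0 \<Longrightarrow> f i = 0" for f :: "_ \<Rightarrow> real"
    using that \<open>finite I\<close> by (intro sum.mono_neutral_right) (auto simp: J_def)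
  have "indep_vars (\<lambda>_. borel) (\<lambda>i x. 0 + a i * X i x) J"
    using indep_vars_subset[OF indep \<open>J \<subseteq> I\<close>] by (rule indep_vars_compose2) auto
  moreover have "distributed M lborel (\<lambda>x. 0 + a i * X i x) (normal_density 0 \<bar>a i\<bar>)" if "i \<in> J" for i
  proof -
    have "distributed M lborel (\<lambda>x. 0 + a i * X i x) (normal_density (0 + a i * 0) (\<bar>a i\<bar> * 1))"
      using that by (intro normal_density_affine X) (auto simp: J_def)
    then show ?thesis by simp
  qed
  ultimately have "distributed M lborel (\<lambda>x. \<Sum>i\<in>J. 0 + a i * X i x)
      (normal_density (\<Sum>i\<in>J. 0) (sqrt (\<Sum>i\<in>J. \<bar>a i\<bar>\<^sup>2)))"
    using \<open>finite J\<close> \<open>J \<noteq> {}\<close> by (intro sum_indep_normal) (auto simp: J_def)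
  moreover have "(\<Sum>i\<in>J. 0 + a i * X i x) = (\<Sum>i\<in>I. a i * X i x)" for x
    by (simp add: sum_J)
  moreover have "(\<Sum>i\<in>J. \<bar>a i\<bar>\<^sup>2) = (\<Sum>i\<in>I. (a i)\<^sup>2)"
    by (simp add: sum_J)
  ultimately have "distributed M lborel (\<lambda>x. \<Sum>i\<in>I. a i * X i x) (normal_density 0 (sqrt (\<Sum>i\<in>I. (a i)\<^sup>2)))"
    by simp
  moreover obtain i where "i \<in> I" "a i \<noteq> 0" using assms by blast
  then have "0 < sqrt (\<Sum>i\<in>I. (a i)\<^sup>2)"
    using \<open>finite I\<close> by (simp add: sum_pos2)
  ultimately have "distributed M lborel (\<lambda>x. ((\<Sum>i\<in>I. a i * X i x) - 0) / sqrt (\<Sum>i\<in>I. (a i)\<^sup>2))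
      std_normal_density"
    by (intro normal_standard_normal_convert[THEN iffD1])
  then show ?thesis by simp
qed

lemma distr_std_gaussian_inner:
  fixes w :: "'a::euclidean_space" assumes "w \<noteq> 0"
  shows "distr std_gaussian borel (\<lambda>x. (x \<bullet> w) / norm w) = std_normal"
proof -
  let ?P = "\<Pi>\<^sub>M b\<in>(Basis :: 'a set). std_normal"
  interpret P: prob_space ?P by (intro prob_space_PiM prob_space_std_normal)
  have component: "distributed ?P lborel (\<lambda>f. f b) std_normal_density" if "b \<in> Basis" for b :: 'a
  proof -
    have "distr ?P lborel (\<lambda>f. f b) = distr ?P std_normal (\<lambda>f. f b)" by (rule distr_cong) auto
    then show ?thesis
      using distr_PiM_component[OF prob_space_std_normal that] that
      by (auto simp: distributed_def intro!: measurable_component_singleton)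
  qed
  have "P.indep_vars (\<lambda>_. borel) (\<lambda>b f. f b) Basis"
    using indep_vars_PiM_components[of Basis "\<lambda>_. std_normal"] prob_space_std_normal
    by (auto intro: P.indep_vars_compose2[where Y="\<lambda>_ x. x"])
  moreover have "\<exists>b\<in>Basis. w \<bullet> b \<noteq> 0" using assms euclidean_all_zero_iff by blast
  ultimately have "distributed ?P lborel (\<lambda>f. (\<Sum>b\<in>Basis. (w \<bullet> b) * f b) / sqrt (\<Sum>b\<in>Basis. (w \<bullet> b)\<^sup>2))
      std_normal_density"
    by (intro P.normalized_sum_std_normal_distributed component) auto
  moreover have "(\<Sum>b\<in>Basis. (w \<bullet> b) * f b) = (\<Sum>b\<in>Basis. f b *\<^sub>R b) \<bullet> w" for f
    unfolding inner_sum_left by (simp add: inner_commute mult.commute)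
  moreover have "sqrt (\<Sum>b\<in>Basis. (w \<bullet> b)\<^sup>2) = norm w"
    by (simp add: norm_eq_sqrt_inner euclidean_inner[of w w] power2_eq_square)
  ultimately have "distr ?P lborel (\<lambda>f. ((\<Sum>b\<in>Basis. f b *\<^sub>R b) \<bullet> w) / norm w) = std_normal"
    by (simp add: distributed_def)
  moreover have "distr ?P borel (\<lambda>f. ((\<Sum>b\<in>Basis. f b *\<^sub>R b) \<bullet> w) / norm w)
      = distr ?P lborel (\<lambda>f. ((\<Sum>b\<in>Basis. f b *\<^sub>R b) \<bullet> w) / norm w)"
    by (rule distr_cong) simp_all
  moreover have "distr std_gaussian borel (\<lambda>x. (x \<bullet> w) / norm w)
      = distr ?P borel (\<lambda>f. ((\<Sum>b\<in>Basis. f b *\<^sub>R b) \<bullet> w) / norm w)"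
    unfolding std_gaussian_eq_distr_PiM by (subst distr_distr) (measurable, simp add: comp_def)
  ultimately show ?thesis by simp
qed

lemma emeasure_std_gaussian_inner_greaterThan:
  fixes w :: "'a::euclidean_space" assumes "w \<noteq> 0"
  shows "emeasure std_gaussian {x. a < x \<bullet> w} = emeasure std_normal {a / norm w<..}"
proof -
  have "emeasure std_normal {a / norm w<..} = emeasure std_gaussian ((\<lambda>x. (x \<bullet> w) / norm w) -` {a / norm w<..})"
    unfolding distr_std_gaussian_inner[OF assms, symmetric] by (subst emeasure_distr) auto
  also have "(\<lambda>x. (x \<bullet> w) / norm w) -` {a / norm w<..} = {x. a < x \<bullet> w}"
    using assms by (auto simp: divide_less_cancel)
  finally show ?thesis by simp
qed

section \<open>The Gaussian mechanism\<close>

lemma std_gaussian_density_add: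
  fixes w y :: "'a::euclidean_space"
  shows "std_gaussian_density (w + y) = std_gaussian_density y * exp (- (y \<bullet> w) - (norm w)\<^sup>2 / 2)"
proof -
  have "std_gaussian_density (w + y)
      = (\<Prod>b\<in>Basis. std_normal_density (y \<bullet> b) * exp (- ((y \<bullet> b) * (w \<bullet> b)) - (w \<bullet> b)\<^sup>2 / 2))"
    unfolding std_gaussian_density_def
    by (intro prod.cong refl)
       (simp only: inner_add_left add.commute[of "w \<bullet> _"] std_normal_density_add)
  also have "\<dots> = std_gaussian_density y * exp (\<Sum>b\<in>Basis. - ((y \<bullet> b) * (w \<bullet> b)) - (w \<bullet> b)\<^sup>2 / 2)"
    unfolding std_gaussian_density_def prod.distrib exp_sum[OF finite_Basis] ..
  also have "(\<Sum>b\<in>Basis. - ((y \<bullet> b) * (w \<bullet> b)) - (w \<bullet> b)\<^sup>2 / 2) = - (y \<bullet> w) - (norm w)\<^sup>2 / 2"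
  proof -
    have "(norm w)\<^sup>2 = (\<Sum>b\<in>Basis. (w \<bullet> b)\<^sup>2)"
      unfolding power2_norm_eq_inner euclidean_inner[of w w] by (simp add: power2_eq_square)
    then show ?thesis
      by (simp add: sum_subtractf sum_negf sum_divide_distrib[symmetric] euclidean_inner[of y w])
  qed
  finally show ?thesis .
qed

lemma measure_std_gaussian_le_shift:
  fixes w :: "'a::euclidean_space" assumes S: "S \<in> sets borel"
  shows "measure std_gaussian S
    \<le> exp e * measure std_gaussian {y. y - w \<in> S} + measure std_gaussian {y. e - (norm w)\<^sup>2 / 2 < y \<bullet> w}"
proof -
  interpret prob_space "std_gaussian :: 'a measure" by (rule prob_space_std_gaussian)
  \<comment> \<open>the event that the privacy loss \<open>y \<bullet> w + (norm w)\<^sup>2 / 2\<close> exceeds \<open>e\<close>\<close>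
  define L where "L = {y::'a. e - (norm w)\<^sup>2 / 2 < y \<bullet> w}"
  have [measurable]: "L \<in> sets borel" unfolding L_def by measurable
  have emeasure_eq: "emeasure std_gaussian A = (\<integral>\<^sup>+y. ennreal (std_gaussian_density y) * indicator A y \<partial>lborel)"
    if "A \<in> sets borel" for A :: "'a set"
    using that by (simp add: std_gaussian_def emeasure_density)
  have "emeasure std_gaussian {y. y - w \<in> S}
      = (\<integral>\<^sup>+y. ennreal (std_gaussian_density y) * indicator {y. y - w \<in> S} y \<partial>distr lborel borel ((+) w))"
    using S by (simp add: emeasure_eq lborel_distr_plus)
  also have "\<dots> = (\<integral>\<^sup>+y. ennreal (std_gaussian_density (w + y)) * indicator S y \<partial>lborel)"
    using S by (subst nn_integral_distr) (auto simp: indicator_def)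
  finally have shifted: "emeasure std_gaussian {y. y - w \<in> S}
      = (\<integral>\<^sup>+y. ennreal (std_gaussian_density (w + y)) * indicator S y \<partial>lborel)" .
  have pointwise: "ennreal (std_gaussian_density y) * indicator S y
      \<le> ennreal (exp e) * (ennreal (std_gaussian_density (w + y)) * indicator S y)
        + ennreal (std_gaussian_density y) * indicator L y" for y
  proof (cases "y \<in> S \<and> y \<notin> L")
    case True
    then have "std_gaussian_density y = std_gaussian_density (w + y) * exp (y \<bullet> w + (norm w)\<^sup>2 / 2)"
      by (simp add: std_gaussian_density_add mult.assoc flip: exp_add)
    also have "\<dots> \<le> std_gaussian_density (w + y) * exp e"
      using True by (intro mult_left_mono) (auto simp: L_def std_gaussian_density_nonneg)
    finally show ?thesis
      using True by (simp add: ennreal_mult'[symmetric] ennreal_leI mult.commute add_increasing2)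
  qed (auto simp: indicator_def intro: add_increasing)
  have "emeasure std_gaussian S
      \<le> (\<integral>\<^sup>+y. ennreal (exp e) * (ennreal (std_gaussian_density (w + y)) * indicator S y)
          + ennreal (std_gaussian_density y) * indicator L y \<partial>lborel)"
    using S by (simp add: emeasure_eq nn_integral_mono pointwise)
  also have "\<dots> = ennreal (exp e) * emeasure std_gaussian {y. y - w \<in> S} + emeasure std_gaussian L"
    using S by (simp add: shifted emeasure_eq nn_integral_add nn_integral_cmult)
  also have "\<dots> = ennreal (exp e * measure std_gaussian {y. y - w \<in> S} + measure std_gaussian L)"
    by (simp add: emeasure_eq_measure ennreal_mult)
  finally show ?thesis
    unfolding L_def emeasure_eq_measure by (subst (asm) ennreal_le_iff) auto
qed

lemma gaussian_mechanism:
  fixes x x' :: "'a::euclidean_space" and e \<delta> \<sigma> :: real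
  defines "c \<equiv> sqrt (2 * ln (1.25 / \<delta>))"
  assumes B: "B \<in> sets borel" and e: "0 < e" "e < 1" and \<delta>: "0 < \<delta>" "\<delta> < 1" and \<sigma>: "0 < \<sigma>"
    and close: "norm (x - x') \<le> \<sigma> * e / c"
  shows "measure std_gaussian {\<zeta>. x + \<sigma> *\<^sub>R \<zeta> \<in> B}
    \<le> exp e * measure std_gaussian {\<zeta>. x' + \<sigma> *\<^sub>R \<zeta> \<in> B} + \<delta>"
proof -
  interpret prob_space "std_gaussian :: 'a measure" by (rule prob_space_std_gaussian)
  define w where "w = (1 / \<sigma>) *\<^sub>R (x - x')"
  have c: "0 < c" unfolding c_def using \<delta> by simp
  have "norm w = norm (x - x') / \<sigma>" using \<sigma> by (simp add: w_def)
  also have "\<dots> \<le> (\<sigma> * e / c) / \<sigma>" using close \<sigma> by (intro divide_right_mono) auto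
  also have "\<dots> = e / c" using \<sigma> by simp
  finally have w: "norm w \<le> e / c" .
  have "measure std_gaussian {y. e - (norm w)\<^sup>2 / 2 < y \<bullet> w} \<le> \<delta>"
  proof (cases "w = 0")
    case True
    then show ?thesis using e \<delta> by simp
  next
    case False
    have "c \<le> e / norm w" and "norm w / 2 \<le> e / (2 * c)"
      using w c False by (simp_all add: field_simps)
    then have "c - e / (2 * c) \<le> (e - (norm w)\<^sup>2 / 2) / norm w"
      using False by (simp add: diff_divide_distrib power2_eq_square)
    then have "emeasure std_normal {(e - (norm w)\<^sup>2 / 2) / norm w<..} \<le> ennreal \<delta>"
      unfolding c_def by (rule emeasure_std_normal_greaterThan_le_delta[OF e \<delta>])
    then show ?thesis
      using \<delta> by (simp add: emeasure_std_gaussian_inner_greaterThan[OF False, symmetric] emeasure_eq_measure)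
  qed
  moreover have "{y. y - w \<in> {\<zeta>. x + \<sigma> *\<^sub>R \<zeta> \<in> B}} = {\<zeta>. x' + \<sigma> *\<^sub>R \<zeta> \<in> B}"
    using \<sigma> by (auto simp: w_def algebra_simps)
  moreover have "{\<zeta>. x + \<sigma> *\<^sub>R \<zeta> \<in> B} \<in> sets borel" using B by measurable
  ultimately show ?thesis
    using measure_std_gaussian_le_shift[of "{\<zeta>. x + \<sigma> *\<^sub>R \<zeta> \<in> B}" e w] by simp
qed

section \<open>Privacy of efficient propose-test-release\<close>

lemma measure_distr_bernoulli_choice:
  fixes M :: "'a measure" and N :: "'b::topological_space measure"
  assumes M: "prob_space M" and N: "prob_space N" "sets N = sets borel"
    and p: "0 \<le> p" "p \<le> 1" and f: "f \<in> borel_measurable M" and B: "B \<in> sets borel"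
  shows "measure (distr (measure_pmf (bernoulli_pmf p) \<Otimes>\<^sub>M (M \<Otimes>\<^sub>M N)) borel
      (\<lambda>(I, x, y). if I then f x else y)) B
    = p * measure M (f -` B \<inter> space M) + (1 - p) * measure N B"
proof -
  interpret M: prob_space M by (rule M)
  interpret N: prob_space N by (rule N)
  interpret MN: pair_prob_space M N ..
  define K where "K = measure_pmf (bernoulli_pmf p) \<Otimes>\<^sub>M (M \<Otimes>\<^sub>M N)"
  define F where "F = (\<lambda>(I, x, y). if I then f x else y)"
  have sets_N[measurable_cong]: "sets N = sets borel" by (rule N(2))
  have space_N: "space N = UNIV" using sets_eq_imp_space_eq[OF sets_N] by simp
  have F: "F \<in> borel_measurable K"
    unfolding K_def F_def using f by measurable
  have A: "F -` B \<inter> space K \<in> sets K" using F B by measurable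
  have "emeasure (distr K borel F) B = emeasure K (F -` B \<inter> space K)"
    by (rule emeasure_distr[OF F B])
  also have "\<dots> = (\<integral>\<^sup>+I. emeasure (M \<Otimes>\<^sub>M N) (Pair I -` (F -` B \<inter> space K)) \<partial>measure_pmf (bernoulli_pmf p))"
    using A unfolding K_def
    by (intro sigma_finite_measure.emeasure_pair_measure_alt prob_space_imp_sigma_finite MN.prob_space_axioms)
  also have "\<dots> = emeasure (M \<Otimes>\<^sub>M N) ((f -` B \<inter> space M) \<times> space N) * p
      + emeasure (M \<Otimes>\<^sub>M N) (space M \<times> B) * (1 - p)"
  proof -
    have "Pair True -` (F -` B \<inter> space K) = (f -` B \<inter> space M) \<times> space N"
      and "Pair False -` (F -` B \<inter> space K) = space M \<times> B"
      by (auto simp: K_def F_def space_pair_measure space_N)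
    then show ?thesis using p by simp
  qed
  also have "\<dots> = ennreal (p * measure M (f -` B \<inter> space M) + (1 - p) * measure N B)"
    using measurable_sets[OF f B] B sets_N space_N p
    by (simp add: M.prob_space N.prob_space[unfolded space_N] N.emeasure_pair_measure_Times M.emeasure_eq_measure
        N.emeasure_eq_measure ennreal_mult[symmetric] ennreal_plus[symmetric] mult.commute
        del: ennreal_plus)
  finally show ?thesis
    unfolding K_def F_def measure_def[of "distr _ _ _"] using p by (simp del: ennreal_plus)
qed

definition logistic :: "real \<Rightarrow> real" where
  "logistic u = exp u / (exp u + 1)"

lemma logistic_nonneg: "0 \<le> logistic u"
  and logistic_le_1: "logistic u \<le> 1"
  by (simp_all add: logistic_def add_pos_pos)

lemma logistic_le_exp: "logistic u \<le> exp u"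
  by (simp add: logistic_def divide_le_eq add_pos_pos)

lemma one_minus_logistic: "1 - logistic u = logistic (- u)"
proof -
  have "0 < exp u + 1" by (simp add: add_pos_pos)
  then show ?thesis by (simp add: logistic_def exp_minus field_simps)
qed

lemma logistic_le_exp_mult:
  assumes "u \<le> u' + h" "0 \<le> h"
  shows "logistic u \<le> exp h * logistic u'"
proof -
  have "exp u \<le> exp h * exp u'" using assms(1) by (simp add: mult_exp_exp add.commute)
  moreover have "exp u * exp u' \<le> exp h * (exp u' * exp u)" using assms(2) by simp
  ultimately have "exp u + exp u * exp u' \<le> exp h * exp u' + exp h * (exp u' * exp u)"
    by (rule add_mono)
  then have "exp u * (exp u' + 1) \<le> exp h * exp u' * (exp u + 1)"
    by (simp add: algebra_simps)
  then show ?thesis by (simp add: logistic_def field_simps add_pos_pos)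
qed

lemma ePTR_p_eq_logistic: "ePTR_p \<epsilon> \<delta> g = logistic (\<epsilon> / 2 * (g - ePTR_M \<epsilon> \<delta>))"
  by (simp add: ePTR_p_def logistic_def)

lemma ePTR_p_ratio:
  assumes "0 < \<epsilon>" "\<bar>g - g'\<bar> \<le> 1"
  shows "ePTR_p \<epsilon> \<delta> g \<le> exp (\<epsilon> / 2) * ePTR_p \<epsilon> \<delta> g'"
    and "1 - ePTR_p \<epsilon> \<delta> g \<le> exp (\<epsilon> / 2) * (1 - ePTR_p \<epsilon> \<delta> g')"
proof -
  define u u' where "u = \<epsilon> / 2 * (g - ePTR_M \<epsilon> \<delta>)" and "u' = \<epsilon> / 2 * (g' - ePTR_M \<epsilon> \<delta>)"
  have "u - u' = \<epsilon> / 2 * (g - g')" unfolding u_def u'_def by (simp add: right_diff_distrib)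
  moreover have "\<bar>\<epsilon> / 2 * (g - g')\<bar> \<le> \<epsilon> / 2"
    using assms by (simp add: abs_mult mult_left_le)
  ultimately have "u \<le> u' + \<epsilon> / 2" "- u \<le> - u' + \<epsilon> / 2" by linarith+
  then show "ePTR_p \<epsilon> \<delta> g \<le> exp (\<epsilon> / 2) * ePTR_p \<epsilon> \<delta> g'"
    and "1 - ePTR_p \<epsilon> \<delta> g \<le> exp (\<epsilon> / 2) * (1 - ePTR_p \<epsilon> \<delta> g')"
    unfolding ePTR_p_eq_logistic one_minus_logistic u_def[symmetric] u'_def[symmetric]
    using assms(1) by (simp_all add: logistic_le_exp_mult)
qed

lemma ePTR_p_le_delta:
  assumes "g \<le> 0" "0 < \<epsilon>" "0 < \<delta>" "\<delta> < 1"
  shows "ePTR_p \<epsilon> \<delta> g \<le> \<delta>"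
proof -
  have "ln (1 / \<delta>) \<le> ln (max (1 / \<delta>) (1 / \<epsilon>))"
    using assms by (subst ln_le_cancel_iff) (auto simp: less_max_iff_disj)
  moreover have "\<epsilon> / 2 * ePTR_M \<epsilon> \<delta> = \<epsilon> / 2 + ln (max (1 / \<delta>) (1 / \<epsilon>))"
    using assms by (simp add: ePTR_M_def field_simps)
  moreover have "\<epsilon> / 2 * g \<le> 0" using assms by (simp add: mult_nonneg_nonpos)
  moreover have "ln (1 / \<delta>) = - ln \<delta>" using assms by (simp add: ln_div)
  ultimately have "\<epsilon> / 2 * (g - ePTR_M \<epsilon> \<delta>) \<le> ln \<delta>"
    unfolding right_diff_distrib using assms by linarith
  then have "exp (\<epsilon> / 2 * (g - ePTR_M \<epsilon> \<delta>)) \<le> \<delta>"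
    using assms by (metis exp_le_cancel_iff exp_ln)
  then show ?thesis
    unfolding ePTR_p_eq_logistic using logistic_le_exp order_trans by blast
qed

lemma measure_ePTR:
  fixes \<theta> :: "'z list \<Rightarrow> real ^ 'q"
  assumes "prob_space \<pi>" "sets \<pi> = sets borel" "B \<in> sets borel"
  shows "measure (ePTR \<theta> \<alpha> \<gamma> \<epsilon> \<delta> \<pi> X) B
    = ePTR_p \<epsilon> \<delta> (\<gamma> X)
        * measure std_gaussian {\<zeta>. \<theta> X + (2 * \<alpha> / \<epsilon> * sqrt (2 * ln (1.25 / \<delta>))) *\<^sub>R \<zeta> \<in> B}
      + (1 - ePTR_p \<epsilon> \<delta> (\<gamma> X)) * measure \<pi> B"
proof -
  let ?\<sigma> = "2 * \<alpha> / \<epsilon> * sqrt (2 * ln (1.25 / \<delta>))"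
  have "ePTR_p \<epsilon> \<delta> (\<gamma> X) \<le> 1" "0 \<le> ePTR_p \<epsilon> \<delta> (\<gamma> X)"
    unfolding ePTR_p_eq_logistic by (rule logistic_le_1 logistic_nonneg)+
  then have "measure (ePTR \<theta> \<alpha> \<gamma> \<epsilon> \<delta> \<pi> X) B
    = ePTR_p \<epsilon> \<delta> (\<gamma> X) * measure std_gaussian ((\<lambda>\<zeta>. \<theta> X + ?\<sigma> *\<^sub>R \<zeta>) -` B \<inter> space std_gaussian)
      + (1 - ePTR_p \<epsilon> \<delta> (\<gamma> X)) * measure \<pi> B"
    unfolding ePTR_def std_gauss_eq_std_gaussian using assms
    by (intro measure_distr_bernoulli_choice prob_space_std_gaussian) auto
  then show ?thesis by (simp add: vimage_def)
qed

lemma mixture_le_mult_add: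
  fixes a a' g g' b k \<delta> :: real
  assumes "0 \<le> a" "a \<le> 1" "0 \<le> a'" "a' \<le> 1" "0 \<le> g" "g \<le> 1" "0 \<le> g'" "0 \<le> b" "0 \<le> \<delta>" "1 \<le> k"
    and a: "a \<le> k * a'" "1 - a \<le> k * (1 - a')"
    and g: "g \<le> k * g' + \<delta> \<or> a \<le> \<delta>"
  shows "a * g + (1 - a) * b \<le> k\<^sup>2 * (a' * g' + (1 - a') * b) + \<delta>"
proof -
  have "(1 - a) * b \<le> k * (1 - a') * b" using a(2) \<open>0 \<le> b\<close> by (rule mult_right_mono)
  also have "\<dots> \<le> k * (k * ((1 - a') * b))"
  proof -
    have "0 \<le> (1 - a') * b" using assms by simp
    then have "1 * ((1 - a') * b) \<le> k * ((1 - a') * b)" by (rule mult_right_mono[OF \<open>1 \<le> k\<close>])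
    then show ?thesis using \<open>1 \<le> k\<close> by (simp add: mult.assoc mult_left_mono)
  qed
  finally have "(1 - a) * b \<le> k\<^sup>2 * ((1 - a') * b)" by (simp add: power2_eq_square)
  moreover have "a * g \<le> k\<^sup>2 * (a' * g') + \<delta>"
    using g
  proof
    assume "g \<le> k * g' + \<delta>"
    then have "a * g \<le> a * (k * g') + a * \<delta>"
      using \<open>0 \<le> a\<close> by (metis distrib_left mult_left_mono)
    also have "a * (k * g') \<le> k * a' * (k * g')"
      using a(1) assms by (intro mult_right_mono) auto
    also have "a * \<delta> \<le> \<delta>"
      using assms by (intro mult_left_le_one_le) auto
    finally show ?thesis by (simp add: power2_eq_square ac_simps)
  next
    assume "a \<le> \<delta>"
    moreover have "a * g \<le> a" using assms by (intro mult_left_le) auto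
    moreover have "0 \<le> k\<^sup>2 * (a' * g')" using assms by simp
    ultimately show ?thesis by linarith
  qed
  ultimately show ?thesis by (simp add: algebra_simps)
qed

lemma measure_ePTR_neighbors_le:
  fixes \<theta> :: "'z list \<Rightarrow> real ^ 'q"
  assumes \<pi>: "prob_space \<pi>" "sets \<pi> = sets borel" and B: "B \<in> sets borel"
    and \<alpha>: "0 < \<alpha>" and \<epsilon>: "0 < \<epsilon>" "\<epsilon> < 2" and \<delta>: "0 < \<delta>" "\<delta> < 1"
    and \<gamma>: "\<bar>\<gamma> X - \<gamma> X'\<bar> \<le> 1"
    and sensitivity: "0 < \<gamma> X \<Longrightarrow> norm (\<theta> X - \<theta> X') \<le> \<alpha>"
  shows "measure (ePTR \<theta> \<alpha> \<gamma> \<epsilon> \<delta> \<pi> X) B \<le> exp \<epsilon> * measure (ePTR \<theta> \<alpha> \<gamma> \<epsilon> \<delta> \<pi> X') B + \<delta>"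
proof -
  define c where "c = sqrt (2 * ln (1.25 / \<delta>))"
  define \<sigma> where "\<sigma> = 2 * \<alpha> / \<epsilon> * c"
  define a a' where "a = ePTR_p \<epsilon> \<delta> (\<gamma> X)" and "a' = ePTR_p \<epsilon> \<delta> (\<gamma> X')"
  define g g' where "g = measure std_gaussian {\<zeta>. \<theta> X + \<sigma> *\<^sub>R \<zeta> \<in> B}"
    and "g' = measure std_gaussian {\<zeta>. \<theta> X' + \<sigma> *\<^sub>R \<zeta> \<in> B}"
  interpret std_gaussian: prob_space "std_gaussian :: (real ^ 'q) measure"
    by (rule prob_space_std_gaussian)
  interpret \<pi>: prob_space \<pi> by (rule \<pi>(1))
  have c: "0 < c" unfolding c_def using \<delta> by simp
  have "g \<le> exp (\<epsilon> / 2) * g' + \<delta> \<or> a \<le> \<delta>"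
  proof (cases "0 < \<gamma> X")
    case True
    have "norm (\<theta> X - \<theta> X') \<le> \<sigma> * (\<epsilon> / 2) / c"
      using sensitivity[OF True] c \<epsilon> by (simp add: \<sigma>_def)
    then show ?thesis
      unfolding g_def g'_def c_def
      using gaussian_mechanism[OF B, of "\<epsilon> / 2" \<delta> \<sigma>] \<alpha> \<epsilon> \<delta> c by (simp add: \<sigma>_def c_def)
  next
    case False
    then show ?thesis using ePTR_p_le_delta \<epsilon> \<delta> by (simp add: a_def)
  qed
  then have "a * g + (1 - a) * measure \<pi> B
      \<le> (exp (\<epsilon> / 2))\<^sup>2 * (a' * g' + (1 - a') * measure \<pi> B) + \<delta>"
    unfolding a_def a'_def g_def g'_def using ePTR_p_ratio[OF \<epsilon>(1) \<gamma>] \<epsilon> \<delta>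
    by (intro mixture_le_mult_add)
       (auto simp: ePTR_p_eq_logistic logistic_nonneg logistic_le_1)
  moreover have "(exp (\<epsilon> / 2))\<^sup>2 = exp \<epsilon>"
    by (simp add: power2_eq_square flip: exp_add)
  ultimately show ?thesis
    using measure_ePTR[OF \<pi> B, of \<theta> \<alpha> \<gamma> \<epsilon> \<delta>] by (simp add: a_def a'_def g_def g'_def \<sigma>_def c_def)
qed

lemma sub_sens_neighbors_norm_le:
  assumes "X \<in> sub_sens n \<alpha> \<theta>" "neighbors n X X'"
  shows "norm (\<theta> X - \<theta> X') \<le> \<alpha>"
proof -
  have "ereal (norm (\<theta> X - \<theta> X')) \<le> local_sens n \<theta> X"
    unfolding local_sens_def by (rule SUP_upper) (use assms(2) in simp)
  also have "\<dots> \<le> ereal \<alpha>" using assms(1) by (simp add: sub_sens_def)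
  finally show ?thesis by simp
qed

lemma sub_distance_neighbors_abs_le:
  assumes "sub_distance n G \<gamma>" "neighbors n X X'"
  shows "\<bar>\<gamma> X - \<gamma> X'\<bar> \<le> 1"
  using assms unfolding sub_distance_def neighbors_def by fastforce

lemma sub_distance_pos_imp_mem:
  assumes "sub_distance n G \<gamma>" "X \<in> datasets n" "0 < \<gamma> X"
  shows "X \<in> G"
  using assms unfolding sub_distance_def by blast

theorem theorem1:
  fixes n :: nat
    and \<theta> :: "'z list \<Rightarrow> real ^ 'q"
    and \<alpha> \<epsilon> \<delta> :: real
    and G :: "'z list set"
    and \<gamma> :: "'z list \<Rightarrow> real"
    and \<pi> :: "(real ^ 'q) measure"
  assumes "n \<ge> 1"
    and "\<alpha> > 0" and "0 < \<epsilon>" and "\<epsilon> < 2" and "0 < \<delta>" and "\<delta> < 1"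
    and "G \<subseteq> sub_sens n \<alpha> \<theta>"
    and "sub_distance n G \<gamma>"
    and "prob_space \<pi>" and "sets \<pi> = sets borel"
  shows "DP n \<epsilon> \<delta> (ePTR \<theta> \<alpha> \<gamma> \<epsilon> \<delta> \<pi>)"
  unfolding DP_def
proof (intro allI impI)
  fix X X' B
  assume neighbors: "neighbors n X X'" and "B \<in> sets (ePTR \<theta> \<alpha> \<gamma> \<epsilon> \<delta> \<pi> X)"
  then have "B \<in> sets borel" by (simp add: ePTR_def)
  moreover have "norm (\<theta> X - \<theta> X') \<le> \<alpha>" if "0 < \<gamma> X"
    using sub_distance_pos_imp_mem[OF assms(8) _ that] neighbors assms(7)
    by (auto simp: neighbors_def intro: sub_sens_neighbors_norm_le)
  ultimately show "measure (ePTR \<theta> \<alpha> \<gamma> \<epsilon> \<delta> \<pi> X) B \<le> exp \<epsilon> * measure (ePTR \<theta> \<alpha> \<gamma> \<epsilon> \<delta> \<pi> X') B + \<delta>"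
    using assms sub_distance_neighbors_abs_le[OF assms(8) neighbors] by (intro measure_ePTR_neighbors_le) auto
qed

end
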